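(* Under the hypotheses and notation of the preceding statement (so $a<b$ coprime positive integers, $\alpha=\sqrt{b/a}\notin\mathbb{Q}$, $\Gamma$ a full-rank lattice in $\mathbb{Z}^2$ with basis $\mathbf e_1=(\lambda_1,\mu_1),\mathbf e_2=(\lambda_2,\mu_2)$ satisfying $\|\mathbf e_1\|\le2\nu_2$, $\|\mathbf e_2\|\le2\nu_1$, and $\theta=-\frac{\lambda_1-\alpha\mu_1}{\lambda_2-\alpha\mu_2}$), for every $N>1$, $$ND_\alpha(N)=O\Big(\frac{b}{\log b}\log N\Big),\qquad ND_\theta(N)=O\Big(\frac{b\det\Gamma}{\log(b\det\Gamma)}\log N\Big),$$ with absolute implied constants.
   Context: $\|(x,y)\|=\max(|x|,|y|)$; $\nu_1\le\nu_2$ are the successive minima of $\Gamma$ for this norm. For real $\vartheta$, $D_\vartheta(N)=\sup_{\lambda\in[0,1]}\big|\frac{\#\{1\le n\le N:\{n\vartheta\}\in[0,\lambda]\}}{N}-\lambda\big|$, $\{x\}$ denoting the fractional part. *)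

theory Defs
  imports "HOL-Analysis.Analysis"
begin

definition supn :: "int \<times> int \<Rightarrow> int" where
  "supn v = max \<bar>fst v\<bar> \<bar>snd v\<bar>"

definition lattice_of :: "int \<times> int \<Rightarrow> int \<times> int \<Rightarrow> (int \<times> int) set" where
  "lattice_of e1 e2 = {(m * fst e1 + n * fst e2, m * snd e1 + n * snd e2) | m n. True}"

definition det2 :: "int \<times> int \<Rightarrow> int \<times> int \<Rightarrow> int" where
  "det2 v w = fst v * snd w - snd v * fst w"

definition nu1 :: "(int \<times> int) set \<Rightarrow> int" where
  "nu1 G = (LEAST r::int. \<exists>v\<in>G. v \<noteq> (0,0) \<and> supn v = r)"

definition nu2 :: "(int \<times> int) set \<Rightarrow> int" where
  "nu2 G = (LEAST r::int. \<exists>v\<in>G. \<exists>w\<in>G. det2 v w \<noteq> 0 \<and> supn v \<le> r \<and> supn w \<le> r)"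

definition discr :: "real \<Rightarrow> nat \<Rightarrow> real" where
  "discr t N = (SUP l\<in>{0..1::real}.
     \<bar>real (card {n\<in>{1..N}. frac (real n * t) \<in> {0..l}}) / real N - l\<bar>)"

end

(* If |q t - p| >= 1/(A q) for all q >= 1, the counting error of {n t} in [0, l] over
   1 <= n <= N is O((A / log A) log N). A Dirichlet denominator q <= N with N < A q splits the
   range into j < A blocks of q consecutive terms plus a shorter tail treated recursively; on
   each block n p mod q runs through all residues, so the block hits [0, l] q l + O(1) times,
   and j <= (A / log A) log j + O(log j) because x / log x increases.
   For alpha = sqrt (b / a) the norm form a X^2 - b Y^2 is a nonzero integer, which makes
   alpha badly approximable with A = O(b). theta is a ratio of two values of the linear form
   X - alpha Y on the lattice, and the same argument gives A = O(b det), once the hypotheses on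
   the basis are turned into |e2|^2, |e1| |e2| <= 8 det via nu1^2 <= 2 det and nu1 nu2 <= 2 det. *)

theory Submission
  imports Defs
begin

section \<open>Fractional parts in blocks of consecutive multiples\<close>

definition frac_count :: "real \<Rightarrow> nat \<Rightarrow> nat \<Rightarrow> real \<Rightarrow> nat" where
  "frac_count t M L l = card {n \<in> {M<..M+L}. frac (real n * t) \<in> {0..l}}"

lemma frac_count_le: "frac_count t M L l \<le> L"
proof -
  have "frac_count t M L l \<le> card {M<..M+L}"
    unfolding frac_count_def by (rule card_mono) auto
  then show ?thesis by simp
qed

lemma frac_count_add: "frac_count t M (L + L') l = frac_count t M L l + frac_count t (M + L) L' l"
proof -
  let ?P = "\<lambda>n::nat. frac (real n * t) \<in> {0..l}"
  have "{n \<in> {M<..M+(L+L')}. ?P n} = {n \<in> {M<..M+L}. ?P n} \<union> {n \<in> {M+L<..M+L+L'}. ?P n}"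
    by auto
  moreover have "card ({n \<in> {M<..M+L}. ?P n} \<union> {n \<in> {M+L<..M+L+L'}. ?P n})
        = card {n \<in> {M<..M+L}. ?P n} + card {n \<in> {M+L<..M+L+L'}. ?P n}"
    by (rule card_Un_disjoint) auto
  ultimately show ?thesis unfolding frac_count_def by (simp add: add.assoc)
qed

lemma frac_count_add_error:
  "\<bar>real (frac_count t M (L + L') l) - real (L + L') * l\<bar>
    \<le> \<bar>real (frac_count t M L l) - L * l\<bar> + \<bar>real (frac_count t (M + L) L' l) - L' * l\<bar>"
proof -
  have "real (frac_count t M (L + L') l) - (L + L') * l
      = (real (frac_count t M L l) - L * l) + (real (frac_count t (M + L) L' l) - L' * l)"
    using frac_count_add[of t M L L' l] by (simp add: algebra_simps)
  then show ?thesis by (simp only: abs_triangle_ineq)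
qed

lemma bij_betw_affine_mod:
  fixes p K :: int and q M :: nat
  assumes q: "0 < q" and cop: "coprime p (int q)"
  shows "bij_betw (\<lambda>n. nat ((int n * p + K) mod int q)) {M<..M+q} {..<q}"
proof -
  let ?r = "\<lambda>n. nat ((int n * p + K) mod int q)"
  have inj: "inj_on ?r {M<..M+q}"
  proof (rule inj_onI)
    fix x y assume x: "x \<in> {M<..M+q}" and y: "y \<in> {M<..M+q}" and e: "?r x = ?r y"
    have "(int x * p + K) mod int q = (int y * p + K) mod int q"
      using e q by (metis Euclidean_Rings.pos_mod_sign eq_nat_nat_iff of_nat_0_less_iff)
    then have "int q dvd (int x - int y) * p"
      by (simp add: mod_eq_dvd_iff algebra_simps)
    then have "int q dvd int x - int y"
      using cop by (metis coprime_commute coprime_dvd_mult_left_iff)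
    then obtain z where z: "int x - int y = int q * z" by (auto elim: dvdE)
    have "\<bar>int x - int y\<bar> < int q" using x y by auto
    then have "\<bar>z\<bar> < 1" using z q by (simp add: abs_mult)
    then show "x = y" using z by simp
  qed
  have "?r ` {M<..M+q} \<subseteq> {..<q}" using q by (auto simp: nat_less_iff)
  moreover have "card (?r ` {M<..M+q}) = card {..<q}" using card_image[OF inj] by simp
  ultimately have "?r ` {M<..M+q} = {..<q}" by (simp add: card_subset_eq)
  then show ?thesis using inj by (simp add: bij_betw_def)
qed

(* With q t = p + e, the point n t lies modulo 1 at (n p + K) / q plus (M e - K + (n - M) e) / q;
   K = floor (M e) absorbs the error accumulated before the block and the drift inside the
   block is at most 1/q. *)
lemma frac_in_residue_window:
  fixes t :: real and p :: int and q M n :: nat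
  defines "i \<equiv> nat ((int n * p + \<lfloor>M * (q * t - p)\<rfloor>) mod int q)"
  assumes q: "0 < q" and app: "\<bar>q * t - p\<bar> \<le> 1/q" and n: "n \<in> {M<..M+q}"
    and i: "1 \<le> i" "i + 2 \<le> q"
  shows "(real i - 1)/q \<le> frac (n * t) \<and> frac (n * t) < (real i + 2)/q"
proof -
  define e where "e = q * t - p"
  define K where "K = \<lfloor>M * e\<rfloor>"
  define D where "D = (int n * p + K) div int q"
  define c where "c = (M * e - K)/q"
  define \<delta> where "\<delta> = (real n - M) * e/q"
  define g where "g = real i/q + c + \<delta>"
  have qr: "real q > 0" using q by simp
  have "M * e - K = frac (M * e)" unfolding K_def frac_def by simp
  then have c: "0 \<le> c" "c < 1/q"
    unfolding c_def using qr frac_lt_1[of "M * e"] by (simp_all add: divide_strict_right_mono)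
  have "\<bar>(real n - M) * e\<bar> \<le> q * (1/q)"
    unfolding abs_mult e_def using n app by (intro mult_mono) auto
  then have "\<bar>\<delta>\<bar> \<le> 1/q" unfolding \<delta>_def using qr by (simp add: divide_right_mono)
  then have drift: "- (1/q) \<le> \<delta>" "\<delta> \<le> 1/q" by auto
  have "int n * p + K = int q * D + int i"
    unfolding D_def i_def K_def e_def using q by simp
  then have i_eq: "real i = real n * p + K - real q * D"
    by (metis add_diff_cancel_left' of_int_add of_int_diff of_int_mult of_int_of_nat_eq)
  have nt: "real n * t = D + g"
    unfolding g_def c_def \<delta>_def e_def i_eq using qr by (simp add: field_simps)
  have split: "(real i - 1)/q = real i/q - 1/q" "(real i + 2)/q = real i/q + 1/q + 1/q"
    by (simp_all add: diff_divide_distrib add_divide_distrib)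
  have lo: "(real i - 1)/q \<le> g" and hi: "g < (real i + 2)/q"
    unfolding split g_def using c drift by linarith+
  moreover have "0 \<le> (real i - 1)/q" "(real i + 2)/q \<le> 1"
    using i qr by simp_all
  ultimately have "frac g = g" by (simp add: frac_eq)
  then have "frac (n * t) = g" unfolding nt by (simp add: frac_add_of_int_left)
  then show ?thesis using lo hi by simp
qed

(* Residue i places frac (n t) in [(i - 1)/q, (i + 2)/q), so only residues near 0, q - 1 and
   q l are undecided. *)
lemma hit_residues_bounds:
  fixes t l :: real and p :: int and q M :: nat
  defines "r \<equiv> \<lambda>n. nat ((int n * p + \<lfloor>M * (q * t - p)\<rfloor>) mod int q)"
    and "S \<equiv> {n \<in> {M<..M+q}. frac (real n * t) \<in> {0..l}}"
    and "f \<equiv> nat \<lfloor>q * l\<rfloor>"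
  assumes q: "0 < q" and cop: "coprime p (int q)" and app: "\<bar>q * t - p\<bar> \<le> 1/q"
    and l: "0 \<le> l" "l \<le> 1"
  shows "{1..<f-1} \<subseteq> r ` S" and "r ` S \<subseteq> {0, q-1} \<union> {..<f+2}"
proof -
  have qr: "real q > 0" using q by simp
  have "real f = \<lfloor>q * l\<rfloor>" unfolding f_def using l qr by simp
  then have f: "real f \<le> q * l" "q * l < real f + 1"
    using of_int_floor_le[of "q * l"] real_of_int_floor_add_one_gt[of "q * l"] by linarith+
  have "q * l \<le> q" using l qr by simp
  then have "f \<le> q" using f by linarith
  have bij: "bij_betw r {M<..M+q} {..<q}"
    unfolding r_def by (rule bij_betw_affine_mod[OF q cop])
  have window: "(real (r n) - 1)/q \<le> frac (n * t) \<and> frac (n * t) < (real (r n) + 2)/q"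
    if "n \<in> {M<..M+q}" "1 \<le> r n" "r n + 2 \<le> q" for n
    using frac_in_residue_window[OF q app that[unfolded r_def]] unfolding r_def .
  show "{1..<f-1} \<subseteq> r ` S"
  proof
    fix i assume i: "i \<in> {1..<f-1}"
    then have "i \<in> r ` {M<..M+q}" using bij \<open>f \<le> q\<close> by (auto simp: bij_betw_imp_surj_on)
    then obtain n where n: "n \<in> {M<..M+q}" and ni: "r n = i" by auto
    have "1 \<le> r n" "r n + 2 \<le> q" using i ni \<open>f \<le> q\<close> by auto
    note w = window[OF n this]
    have "real i + 2 \<le> real f" using i by auto
    then have "(real i + 2)/q \<le> l" using f qr by (simp add: field_simps)
    moreover have "0 \<le> (real i - 1)/q" using i by simp
    ultimately have "frac (real n * t) \<in> {0..l}" using w ni by auto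
    then show "i \<in> r ` S" using n ni unfolding S_def by blast
  qed
  show "r ` S \<subseteq> {0, q-1} \<union> {..<f+2}"
  proof
    fix i assume "i \<in> r ` S"
    then obtain n where n: "n \<in> {M<..M+q}" "frac (n * t) \<le> l" and i: "i = r n"
      unfolding S_def by auto
    have "r n < q" using bij n by (auto dest: bij_betw_apply)
    moreover have "r n < f + 2" if "1 \<le> r n" "r n + 2 \<le> q"
    proof -
      have "(real (r n) - 1)/q \<le> l" using window[OF n(1) that] n(2) by linarith
      then have "real (r n) - 1 \<le> q * l" using qr by (simp add: field_simps)
      then show ?thesis using f by linarith
    qed
    ultimately show "i \<in> {0, q-1} \<union> {..<f+2}" using i by fastforce
  qed
qed

lemma frac_count_block:
  fixes t l :: real and p :: int and q M :: nat
  assumes q: "0 < q" and cop: "coprime p (int q)" and app: "\<bar>q * t - p\<bar> \<le> 1/q"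
    and l: "0 \<le> l" "l \<le> 1"
  shows "\<bar>real (frac_count t M q l) - q * l\<bar> \<le> 4"
proof -
  define r where "r = (\<lambda>n. nat ((int n * p + \<lfloor>M * (q * t - p)\<rfloor>) mod int q))"
  define S where "S = {n \<in> {M<..M+q}. frac (real n * t) \<in> {0..l}}"
  define f where "f = nat \<lfloor>q * l\<rfloor>"
  note hits = hit_residues_bounds[OF q cop app l, of M, folded r_def S_def f_def]
  have "real f = \<lfloor>q * l\<rfloor>" unfolding f_def using l q by simp
  then have f: "real f \<le> q * l" "q * l < real f + 1"
    using of_int_floor_le[of "q * l"] real_of_int_floor_add_one_gt[of "q * l"] by linarith+
  have S: "S \<subseteq> {M<..M+q}" unfolding S_def by auto
  have "inj_on r {M<..M+q}"
    using bij_betw_affine_mod[OF q cop] unfolding r_def by (rule bij_betw_imp_inj_on)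
  then have card_S: "card (r ` S) = card S" using card_image inj_on_subset[OF _ S] by blast
  have "card (r ` S) \<le> card ({0, q-1} \<union> {..<f+2})" using hits(2) by (intro card_mono) simp_all
  also have "\<dots> \<le> card {0, q-1} + card {..<f+2}" by (rule card_Un_le)
  also have "\<dots> \<le> 2 + (f + 2)" by (simp add: card_insert_if)
  finally have upper: "real (card S) \<le> q * l + 4" using f card_S by linarith
  have "card {1..<f-1} \<le> card (r ` S)"
    using hits(1) finite_subset[OF S] by (intro card_mono) auto
  then have lower: "q * l - 4 \<le> real (card S)" using f card_S by simp
  show ?thesis using upper lower unfolding frac_count_def S_def[symmetric] by simp
qed

lemma frac_count_blocks:
  fixes t l :: real and p :: int and q :: nat
  assumes "0 < q" "coprime p (int q)" "\<bar>q * t - p\<bar> \<le> 1/q" "0 \<le> l" "l \<le> 1"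
  shows "\<bar>real (frac_count t M (j * q) l) - real (j * q) * l\<bar> \<le> 4 * real j"
proof (induction j arbitrary: M)
  case 0
  then show ?case by (simp add: frac_count_def)
next
  case (Suc j)
  have "frac_count t M (Suc j * q) l = frac_count t M q l + frac_count t (M + q) (j * q) l"
    using frac_count_add[of t M q "j * q" l] by (simp add: add.commute)
  then show ?case
    using frac_count_block[OF assms, of M] Suc.IH[of "M + q"] by (simp add: algebra_simps abs_le_iff)
qed

section \<open>Discrepancy of badly approximable numbers\<close>

definition badly_approximable :: "real \<Rightarrow> real \<Rightarrow> bool" where
  "badly_approximable t A \<longleftrightarrow> (\<forall>q p :: int. 0 < q \<longrightarrow> 1 / (A * of_int q) \<le> \<bar>of_int q * t - of_int p\<bar>)"

lemma badly_approximableD: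
  fixes t A :: real and q p :: int
  assumes "badly_approximable t A" "0 < q"
  shows "1 / (A * q) \<le> \<bar>q * t - p\<bar>"
  using assms unfolding badly_approximable_def by blast

lemma badly_approximable_denominator:
  fixes t A :: real
  assumes ba: "badly_approximable t A" and A: "0 < A" and L: "2 \<le> L"
  obtains q :: nat and p :: int
  where "0 < q" "q \<le> L" "real L < A * q" "coprime p (int q)" "\<bar>q * t - p\<bar> \<le> 1/q"
proof -
  obtain p k where cop: "coprime p k" and k: "0 < k" "k \<le> int L"
    and app: "\<bar>of_int k * t - of_int p\<bar> < 1/L"
    using Dirichlet_approx_coprime[of L t] L by auto
  define q where "q = nat k"
  have kq: "k = int q" using k unfolding q_def by simp
  have q: "0 < q" "q \<le> L" using k kq by auto
  have app': "\<bar>q * t - p\<bar> < 1/L" using app kq by simp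
  have "1/(A * q) \<le> \<bar>q * t - p\<bar>"
    using badly_approximableD[OF ba, of "int q" p] q(1) by simp
  then have "1/(A * q) < 1/L" using app' by linarith
  moreover have "0 < real q" "0 < real L" using q by simp_all
  ultimately have "real L < A * q" using A by (simp add: field_simps)
  moreover have "1/real L \<le> 1/real q" using q by (simp add: frac_le)
  then have "\<bar>q * t - p\<bar> \<le> 1/q" using app' by linarith
  moreover have "coprime p (int q)" using cop kq by simp
  ultimately show ?thesis using that q by blast
qed

lemma nat_le_div_ln_mul_ln:
  fixes A :: real
  assumes k: "1 \<le> k" and kA: "real k < A"
  shows "real k \<le> (A / ln A + 3) * ln (real (max k 2))"
proof (cases "k \<le> 2")
  case True
  have "2/3 \<le> ln (2::real)" using ln2_ge_two_thirds .
  moreover have "0 \<le> A / ln A" using k kA by simp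
  ultimately have "3 * ln 2 \<le> (A / ln A + 3) * ln (max k 2)"
    using True by (simp add: max_def mult_right_mono)
  then show ?thesis using True \<open>2/3 \<le> ln 2\<close> by linarith
next
  case False
  then have "exp 1 \<le> real k" using exp_le by linarith
  then have lk: "1 \<le> ln k" using ln_ge_iff[of k 1] k by simp
  define r where "r = A / k"
  have r: "1 \<le> r" "A = k * r" using kA k unfolding r_def by simp_all
  have "ln r \<le> r - 1" using ln_le_minus_one[of r] r by simp
  also have "\<dots> \<le> (r - 1) * ln k" using r lk by (simp add: mult_le_cancel_left1)
  finally have "ln A \<le> ln k + (r - 1) * ln k" using r k by (simp add: ln_mult)
  then have "k * ln A \<le> A * ln k" using r k by (simp add: algebra_simps)
  moreover have "0 < ln A" using kA k by simp
  ultimately have "k \<le> A / ln A * ln k" by (simp add: field_simps)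
  then show ?thesis using False lk by (simp add: max_def distrib_right)
qed

lemma ln_max_add_ln_remainder:
  fixes j q r L :: nat
  assumes L: "L = j * q + r" and j: "1 \<le> j" and r: "r < q" and L2: "2 \<le> L"
  shows "ln (real (max j 2)) + ln r \<le> ln L"
proof (cases "r = 0")
  case True
  have "j \<le> j * q" using r by (cases q) simp_all
  then have "j \<le> L" using L by linarith
  then show ?thesis using True L2 by simp
next
  case False
  have "j * r \<le> j * q" "q \<le> j * q" using r j by simp_all
  then have "j * r \<le> L" "2 * r \<le> L" using L r by linarith+
  then have "max j 2 * r \<le> L" by (simp add: max_def)
  then have "real (max j 2 * r) \<le> real L" by (simp only: of_nat_le_iff)
  then have "ln (real (max j 2 * r)) \<le> ln L" using False by (intro ln_mono) simp_all
  then show ?thesis using False by (simp add: ln_mult)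
qed

(* Splitting L = j q + r with a Dirichlet denominator q, the j < A complete blocks cost
   4 j <= kappa ln (max j 2) and the tail recurses; ln (max j 2) + ln r <= ln L. Since ln 0 = 0,
   the bound also covers L = 0, so an empty tail r = 0 needs no separate case. *)
lemma frac_count_error:
  fixes t A l :: real
  assumes ba: "badly_approximable t A" and A: "2 \<le> A" and l: "0 \<le> l" "l \<le> 1"
  shows "\<bar>real (frac_count t M L l) - L * l\<bar> \<le> 4 * (A / ln A + 3) * ln L + 1"
proof (induction L arbitrary: M rule: less_induct)
  case (less L)
  define \<kappa> where "\<kappa> = 4 * (A / ln A + 3)"
  have \<kappa>: "0 \<le> \<kappa>" unfolding \<kappa>_def using A by simp
  show ?case
  proof (cases "L \<le> 1")
    case True
    have "real (frac_count t M L l) \<le> L" using frac_count_le by simp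
    moreover have "0 \<le> L * l" "L * l \<le> L" using l by (simp_all add: mult_left_le)
    ultimately have "\<bar>real (frac_count t M L l) - L * l\<bar> \<le> 1" using True by linarith
    moreover have "0 \<le> \<kappa> * ln L" using True \<kappa> by (cases "L = 0") simp_all
    ultimately show ?thesis unfolding \<kappa>_def by linarith
  next
    case False
    obtain q p where q: "0 < q" "q \<le> L" "real L < A * q"
      and cop: "coprime p (int q)" and app: "\<bar>q * t - p\<bar> \<le> 1/q"
      using badly_approximable_denominator[OF ba, of L] A False by auto
    define j where "j = L div q"
    define r where "r = L mod q"
    have L: "L = j * q + r" unfolding j_def r_def by simp
    have j: "1 \<le> j" "j * q \<le> L" using q unfolding j_def by (simp_all add: Suc_le_eq div_greater_zero_iff)
    have "r < q" unfolding r_def using q by simp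
    then have r: "r < q" "r < L" using q by linarith+
    have "real (j * q) \<le> real L" using j(2) by (simp only: of_nat_le_iff)
    then have "real j * q < A * q" using q(3) by simp
    then have "real j < A" using q by simp
    then have "4 * real j \<le> 4 * ((A / ln A + 3) * ln (real (max j 2)))"
      using nat_le_div_ln_mul_ln[OF j(1)] by simp
    then have blocks: "4 * real j \<le> \<kappa> * ln (real (max j 2))"
      unfolding \<kappa>_def by (simp only: mult.assoc)
    have "ln (real (max j 2)) + ln r \<le> ln L"
      using ln_max_add_ln_remainder[OF L j(1) r(1)] False by simp
    then have logs: "\<kappa> * ln (real (max j 2)) + \<kappa> * ln r \<le> \<kappa> * ln L"
      using mult_left_mono[OF _ \<kappa>] by (simp flip: distrib_left)
    have "\<bar>real (frac_count t M L l) - L * l\<bar>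
        \<le> \<bar>real (frac_count t M (j * q) l) - real (j * q) * l\<bar>
          + \<bar>real (frac_count t (M + j * q) r l) - r * l\<bar>"
      using frac_count_add_error[of t M "j * q" r l] L by simp
    also have "\<dots> \<le> 4 * real j + (\<kappa> * ln r + 1)"
      using frac_count_blocks[OF q(1) cop app l] less.IH[OF r(2), of "M + j * q"]
      unfolding \<kappa>_def by (rule add_mono)
    also have "\<dots> \<le> \<kappa> * ln L + 1" using blocks logs by linarith
    finally show ?thesis unfolding \<kappa>_def .
  qed
qed

lemma discr_le_log:
  fixes t A :: real
  assumes ba: "badly_approximable t A" and A: "2 \<le> A" and N: "1 \<le> N"
  shows "real N * discr t N \<le> 4 * (A / ln A + 3) * ln N + 1"
proof -
  define B where "B = 4 * (A / ln A + 3) * ln N + 1"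
  have Nr: "0 < real N" using N by simp
  have "discr t N \<le> B / N"
    unfolding discr_def
  proof (rule cSUP_least)
    fix l :: real assume l: "l \<in> {0..1}"
    have "{n \<in> {1..N}. frac (real n * t) \<in> {0..l}} = {n \<in> {0<..0+N}. frac (real n * t) \<in> {0..l}}"
      by auto
    then have count: "card {n \<in> {1..N}. frac (real n * t) \<in> {0..l}} = frac_count t 0 N l"
      unfolding frac_count_def by simp
    have "real (frac_count t 0 N l) / N - l = (real (frac_count t 0 N l) - N * l) / N"
      using Nr by (simp add: diff_divide_distrib)
    also have "\<bar>\<dots>\<bar> \<le> B / N"
      using frac_count_error[OF ba A, of l 0 N] l Nr unfolding B_def
      by (simp add: abs_divide divide_right_mono)
    finally show "\<bar>real (card {n \<in> {1..N}. frac (real n * t) \<in> {0..l}}) / N - l\<bar> \<le> B / N"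
      unfolding count .
  qed simp
  then show ?thesis using Nr unfolding B_def by (simp add: field_simps)
qed

lemma discr_le_div_ln:
  fixes t A Z c :: real
  assumes ba: "badly_approximable t A" and Z: "2 \<le> Z" "Z \<le> A" "A \<le> c * Z" and N: "2 \<le> N"
  shows "real N * discr t N \<le> (4 * c + 14) * (Z / ln Z) * ln N"
proof -
  define X where "X = Z / ln Z"
  have lnZ: "0 < ln Z" "ln Z \<le> ln A" using Z by simp_all
  have "ln Z \<le> Z - 1" using Z ln_le_minus_one by simp
  then have X: "1 \<le> X" unfolding X_def using lnZ by simp
  have "A / ln A \<le> A / ln Z" using lnZ Z by (intro divide_left_mono) auto
  also have "\<dots> \<le> c * X" unfolding X_def using Z lnZ by (simp add: divide_right_mono)
  finally have AX: "A / ln A \<le> c * X" .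
  have "ln 2 \<le> ln (real N)" using N by simp
  then have lnN: "1/2 \<le> ln (real N)" using ln2_ge_two_thirds by linarith
  have "real N * discr t N \<le> 4 * (A / ln A + 3) * ln N + 1"
    using discr_le_log[OF ba] Z N by simp
  also have "\<dots> \<le> 4 * (c * X + 3 * X) * ln N + 2 * X * ln N"
  proof -
    have "4 * (A / ln A + 3) * ln N \<le> 4 * (c * X + 3 * X) * ln N"
      using AX X lnN by (intro mult_right_mono) auto
    moreover have "2 * ln N \<le> 2 * X * ln N"
      using mult_right_mono[of 2 "2 * X" "ln N"] X lnN by simp
    ultimately show ?thesis using lnN by linarith
  qed
  also have "\<dots> = (4 * c + 14) * X * ln N" by (simp add: algebra_simps)
  finally show ?thesis unfolding X_def .
qed

section \<open>Ratios of linear forms in a quadratic irrational\<close>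

lemma norm_form_ge_one:
  fixes a b :: nat and X Y :: int
  assumes a: "0 < a" and irr: "sqrt (b / a) \<notin> \<rat>" and XY: "(X, Y) \<noteq> (0, 0)"
  shows "1 \<le> a * \<bar>X - sqrt (b / a) * Y\<bar> * \<bar>X + sqrt (b / a) * Y\<bar>"
proof -
  define \<alpha> where "\<alpha> = sqrt (b / a)"
  have ar: "0 < real a" using a by simp
  have "int a * X^2 - int b * Y^2 \<noteq> 0"
  proof
    assume h: "int a * X^2 - int b * Y^2 = 0"
    show False
    proof (cases "Y = 0")
      case True
      then show False using h a XY by simp
    next
      case False
      have "real a * X^2 = real b * Y^2" using arg_cong[OF h, of real_of_int] by simp
      then have "b / a = (X / Y)^2" using ar False by (simp add: field_simps power2_eq_square)
      then have "\<alpha> = \<bar>X / Y\<bar>" unfolding \<alpha>_def by simp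
      then show False using irr unfolding \<alpha>_def by simp
    qed
  qed
  then have "1 \<le> \<bar>real_of_int (int a * X^2 - int b * Y^2)\<bar>" by linarith
  also have "real_of_int (int a * X^2 - int b * Y^2) = a * ((X - \<alpha> * Y) * (X + \<alpha> * Y))"
    unfolding \<alpha>_def using ar by (simp add: algebra_simps power2_eq_square)
  finally show ?thesis unfolding \<alpha>_def using ar by (simp add: abs_mult mult.assoc)
qed

lemma linear_form_nonzero:
  fixes a b :: nat and l m :: int
  assumes "sqrt (b / a) \<notin> \<rat>" and "(l, m) \<noteq> (0, 0)"
  shows "l - sqrt (b / a) * m \<noteq> 0"
proof
  assume h: "l - sqrt (b / a) * m = 0"
  show False
  proof (cases "m = 0")
    case True
    then show False using h assms(2) by simp
  next
    case False
    then have "sqrt (b / a) = l / m" using h by (simp add: field_simps)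
    then show False using assms(1) by simp
  qed
qed

lemma mult_sqrt_div_le:
  fixes a b :: real
  assumes "0 < a" "a \<le> b"
  shows "a * sqrt (b / a) \<le> b"
proof -
  have "a * sqrt (b / a) = sqrt a * sqrt a * (sqrt b / sqrt a)"
    using assms by (simp add: real_sqrt_divide)
  also have "\<dots> = sqrt a * sqrt b" using assms by (simp add: field_simps)
  also have "\<dots> \<le> sqrt b * sqrt b" using assms by (intro mult_right_mono) auto
  finally show ?thesis using assms by simp
qed

lemma conjugate_linear_form_le:
  fixes l1 m1 l2 m2 q p :: int and \<alpha> L1 L2 :: real
  defines "L1 \<equiv> l1 - \<alpha> * m1" and "L2 \<equiv> l2 - \<alpha> * m2"
  assumes \<alpha>: "0 \<le> \<alpha>" and L2: "L2 \<noteq> 0" and q: "0 < q" and close: "\<bar>q * (- L1 / L2) - p\<bar> \<le> q"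
  shows "\<bar>L2\<bar> * \<bar>(q * l1 + p * l2) + \<alpha> * (q * m1 + p * m2)\<bar>
    \<le> q * (L2^2 + 2 * \<alpha> * (\<bar>L2\<bar> * (\<bar>m1\<bar> + \<bar>m2\<bar>) + \<bar>L1\<bar> * \<bar>m2\<bar>))"
proof -
  define u where "u = \<bar>q * (- L1 / L2) - p\<bar>"
  define P where "P = \<bar>L2\<bar>"
  define X where "X = real_of_int (q * l1 + p * l2)"
  define Y where "Y = real_of_int (q * m1 + p * m2)"
  have P: "0 < P" using L2 unfolding P_def by simp
  have u: "0 \<le> u" "u \<le> q" using close unfolding u_def by simp_all
  have "X - \<alpha> * Y = - L2 * (q * (- L1 / L2) - p)"
    using L2 unfolding X_def Y_def L1_def L2_def by (simp add: field_simps)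
  then have minus: "\<bar>X - \<alpha> * Y\<bar> = u * P" unfolding u_def P_def by (simp add: abs_mult)
  have "\<bar>real_of_int p\<bar> \<le> \<bar>q * (- L1 / L2)\<bar> + u"
    using abs_triangle_ineq4[of "q * (- L1 / L2)" "q * (- L1 / L2) - p"] unfolding u_def by simp
  then have p: "\<bar>real_of_int p\<bar> \<le> q * \<bar>L1\<bar> / P + u"
    using q unfolding P_def by (simp add: abs_mult abs_divide)
  have "\<bar>Y\<bar> \<le> q * \<bar>m1\<bar> + \<bar>p\<bar> * \<bar>m2\<bar>"
    unfolding Y_def using q abs_triangle_ineq[of "real_of_int q * m1" "real_of_int p * m2"]
    by (simp add: abs_mult)
  then have Y: "\<bar>Y\<bar> \<le> q * \<bar>m1\<bar> + (q * \<bar>L1\<bar> / P + u) * \<bar>m2\<bar>"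
    using mult_right_mono[OF p, of "\<bar>real_of_int m2\<bar>"] by simp
  have "\<bar>X + \<alpha> * Y\<bar> = \<bar>(X - \<alpha> * Y) + 2 * \<alpha> * Y\<bar>" by (simp add: algebra_simps)
  also have "\<dots> \<le> \<bar>X - \<alpha> * Y\<bar> + 2 * \<alpha> * \<bar>Y\<bar>"
    using abs_triangle_ineq[of "X - \<alpha> * Y" "2 * \<alpha> * Y"] \<alpha> by (simp add: abs_mult)
  also have "\<dots> \<le> u * P + 2 * \<alpha> * (q * \<bar>m1\<bar> + (q * \<bar>L1\<bar> / P + u) * \<bar>m2\<bar>)"
    unfolding minus using Y \<alpha> by (simp add: mult_left_mono)
  finally have "P * \<bar>X + \<alpha> * Y\<bar>
      \<le> u * P^2 + 2 * \<alpha> * (q * (P * \<bar>m1\<bar>) + q * (\<bar>L1\<bar> * \<bar>m2\<bar>) + u * (P * \<bar>m2\<bar>))"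
    using P by (simp add: mult_left_mono field_simps power2_eq_square)
  also have "\<dots> = u * P^2 + 2 * \<alpha> * q * (P * \<bar>m1\<bar> + \<bar>L1\<bar> * \<bar>m2\<bar>) + 2 * \<alpha> * u * (P * \<bar>m2\<bar>)"
    by (simp add: algebra_simps)
  also have "\<dots> \<le> q * P^2 + 2 * \<alpha> * q * (P * \<bar>m1\<bar> + \<bar>L1\<bar> * \<bar>m2\<bar>) + 2 * \<alpha> * q * (P * \<bar>m2\<bar>)"
    using u P \<alpha> by (intro add_mono mult_right_mono mult_left_mono) auto
  also have "\<dots> = q * (L2^2 + 2 * \<alpha> * (P * (\<bar>m1\<bar> + \<bar>m2\<bar>) + \<bar>L1\<bar> * \<bar>m2\<bar>))"
    unfolding P_def by (simp add: algebra_simps)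
  finally show ?thesis unfolding P_def X_def Y_def .
qed

(* For (X, Y) = q (l1, m1) + p (l2, m2) one has q theta - p = - (X - alpha Y) / L2, and the
   integer norm form bounds |X - alpha Y| from below by 1 / (a |X + alpha Y|) = 1 / O(q). *)
lemma linear_form_ratio_approx:
  fixes a b :: nat and l1 m1 l2 m2 q p :: int and \<alpha> L1 L2 :: real
  defines "\<alpha> \<equiv> sqrt (b / a)"
  defines "L1 \<equiv> l1 - \<alpha> * m1" and "L2 \<equiv> l2 - \<alpha> * m2"
  assumes a: "0 < a" and irr: "\<alpha> \<notin> \<rat>" and det: "det2 (l1, m1) (l2, m2) \<noteq> 0"
    and q: "0 < q" and close: "\<bar>q * (- L1 / L2) - p\<bar> < 1 / q"
  shows "1 \<le> a * (L2^2 + 2 * \<alpha> * (\<bar>L2\<bar> * (\<bar>m1\<bar> + \<bar>m2\<bar>) + \<bar>L1\<bar> * \<bar>m2\<bar>))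
              * q * \<bar>q * (- L1 / L2) - p\<bar>"
proof -
  define u where "u = \<bar>q * (- L1 / L2) - p\<bar>"
  define X where "X = q * l1 + p * l2"
  define Y where "Y = q * m1 + p * m2"
  have "(l2, m2) \<noteq> (0, 0)" using det unfolding det2_def by auto
  then have L2: "L2 \<noteq> 0" using linear_form_nonzero irr unfolding L2_def \<alpha>_def by blast
  have \<alpha>: "0 \<le> \<alpha>" unfolding \<alpha>_def by simp
  have "1 / real_of_int q \<le> 1" using q by simp
  then have u: "0 \<le> u" "u \<le> q" using close q unfolding u_def by linarith+
  have "(X, Y) \<noteq> (0, 0)"
  proof
    assume "(X, Y) = (0, 0)"
    moreover have "q * det2 (l1, m1) (l2, m2) = X * m2 - Y * l2"
      unfolding X_def Y_def det2_def by (simp add: algebra_simps)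
    ultimately show False using q det by simp
  qed
  then have norm: "1 \<le> a * \<bar>X - \<alpha> * Y\<bar> * \<bar>X + \<alpha> * Y\<bar>"
    using norm_form_ge_one[OF a irr[unfolded \<alpha>_def]] unfolding \<alpha>_def by blast
  have "X - \<alpha> * Y = - L2 * (q * (- L1 / L2) - p)"
    using L2 unfolding X_def Y_def L1_def L2_def by (simp add: field_simps)
  then have "\<bar>X - \<alpha> * Y\<bar> = u * \<bar>L2\<bar>" unfolding u_def by (simp add: abs_mult)
  then have "1 \<le> a * u * (\<bar>L2\<bar> * \<bar>X + \<alpha> * Y\<bar>)" using norm by (simp add: algebra_simps)
  moreover have "\<bar>L2\<bar> * \<bar>X + \<alpha> * Y\<bar> \<le> q * (L2^2 + 2 * \<alpha> * (\<bar>L2\<bar> * (\<bar>m1\<bar> + \<bar>m2\<bar>) + \<bar>L1\<bar> * \<bar>m2\<bar>))"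
    unfolding X_def Y_def L1_def L2_def
    by (rule conjugate_linear_form_le[OF \<alpha> L2[unfolded L2_def] q])
      (use u in \<open>simp add: u_def L1_def L2_def\<close>)
  ultimately have "1 \<le> a * u * (q * (L2^2 + 2 * \<alpha> * (\<bar>L2\<bar> * (\<bar>m1\<bar> + \<bar>m2\<bar>) + \<bar>L1\<bar> * \<bar>m2\<bar>)))"
    using u a by (meson mult_left_mono order_trans mult_nonneg_nonneg of_nat_0_le_iff)
  then show ?thesis unfolding u_def by (simp add: algebra_simps)
qed

lemma badly_approximableI:
  fixes t A :: real
  assumes A: "1 \<le> A"
    and close: "\<And>q p :: int. (0::int) < q \<Longrightarrow> \<bar>q * t - p\<bar> < 1 / q \<Longrightarrow> 1 \<le> A * q * \<bar>q * t - p\<bar>"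
  shows "badly_approximable t A"
  unfolding badly_approximable_def
proof (intro allI impI)
  fix q p :: int assume q: "0 < q"
  show "1 / (A * q) \<le> \<bar>q * t - p\<bar>"
  proof (cases "\<bar>q * t - p\<bar> < 1 / q")
    case True
    then show ?thesis using close[OF q True] A q by (simp add: field_simps)
  next
    case False
    moreover have "1 / (A * q) \<le> 1 / q" using A q by (simp add: frac_le)
    ultimately show ?thesis by linarith
  qed
qed

lemma badly_approximable_sqrt:
  fixes a b :: nat
  assumes a: "0 < a" and ab: "a < b" and irr: "sqrt (b / a) \<notin> \<rat>"
  shows "badly_approximable (sqrt (b / a)) (3 * real b)"
proof (rule badly_approximableI)
  define \<alpha> where "\<alpha> = sqrt (b / a)"
  have "a * (1 + 2 * \<alpha>) \<le> 3 * real b"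
    using mult_sqrt_div_le[of a b] a ab unfolding \<alpha>_def by (simp add: algebra_simps)
  fix q p :: int assume q: "0 < q" and close: "\<bar>q * sqrt (b / a) - p\<bar> < 1 / q"
  \<comment> \<open>alpha is the ratio of the basis (0, 1), (1, 0)\<close>
  have "det2 (0, 1) (1, 0) \<noteq> 0" unfolding det2_def by simp
  from linear_form_ratio_approx[OF a irr this q, of p] close
  have "1 \<le> a * (1 + 2 * \<alpha>) * q * \<bar>q * \<alpha> - p\<bar>" unfolding \<alpha>_def by simp
  also have "\<dots> \<le> 3 * real b * q * \<bar>q * \<alpha> - p\<bar>"
    using \<open>a * (1 + 2 * \<alpha>) \<le> 3 * real b\<close> q by (intro mult_right_mono) auto
  finally show "1 \<le> 3 * real b * q * \<bar>q * sqrt (b / a) - p\<bar>" unfolding \<alpha>_def .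
qed (use ab in simp)

lemma linear_form_abs_le:
  fixes l m :: int and \<alpha> :: real
  assumes "0 \<le> \<alpha>"
  shows "\<bar>l - \<alpha> * m\<bar> \<le> (1 + \<alpha>) * supn (l, m)"
proof -
  have "\<bar>l - \<alpha> * m\<bar> \<le> \<bar>l\<bar> + \<alpha> * \<bar>m\<bar>"
    using abs_triangle_ineq4[of l "\<alpha> * m"] assms by (simp add: abs_mult)
  also have "\<dots> \<le> supn (l, m) + \<alpha> * supn (l, m)"
    unfolding supn_def using assms by (intro add_mono mult_left_mono) auto
  finally show ?thesis by (simp add: algebra_simps)
qed

lemma ratio_constant_le:
  fixes l1 m1 l2 m2 :: int and \<alpha> L1 L2 R1 R2 :: real
  defines "L1 \<equiv> l1 - \<alpha> * m1" and "L2 \<equiv> l2 - \<alpha> * m2"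
    and "R1 \<equiv> supn (l1, m1)" and "R2 \<equiv> supn (l2, m2)"
  assumes \<alpha>: "0 \<le> \<alpha>"
  shows "L2^2 + 2 * \<alpha> * (\<bar>L2\<bar> * (\<bar>m1\<bar> + \<bar>m2\<bar>) + \<bar>L1\<bar> * \<bar>m2\<bar>)
    \<le> (1 + \<alpha>)^2 * (3 * R2^2 + 4 * (R1 * R2))"
proof -
  have R: "\<bar>real_of_int m1\<bar> \<le> R1" "\<bar>real_of_int m2\<bar> \<le> R2" "0 \<le> R1" "0 \<le> R2"
    unfolding R1_def R2_def supn_def by auto
  have L: "\<bar>L1\<bar> \<le> (1 + \<alpha>) * R1" "\<bar>L2\<bar> \<le> (1 + \<alpha>) * R2"
    unfolding L1_def L2_def R1_def R2_def using linear_form_abs_le[OF \<alpha>] by auto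
  have "\<bar>L2\<bar>^2 \<le> ((1 + \<alpha>) * R2)^2" using L(2) by (intro power_mono) auto
  then have "L2^2 \<le> ((1 + \<alpha>) * R2)^2" by simp
  moreover have "\<bar>L2\<bar> * (\<bar>m1\<bar> + \<bar>m2\<bar>) + \<bar>L1\<bar> * \<bar>m2\<bar> \<le> (1 + \<alpha>) * R2 * (R1 + R2) + (1 + \<alpha>) * R1 * R2"
    using L R \<alpha> by (intro add_mono mult_mono) auto
  then have "2 * \<alpha> * (\<bar>L2\<bar> * (\<bar>m1\<bar> + \<bar>m2\<bar>) + \<bar>L1\<bar> * \<bar>m2\<bar>)
      \<le> 2 * (1 + \<alpha>) * ((1 + \<alpha>) * R2 * (R1 + R2) + (1 + \<alpha>) * R1 * R2)"
    using \<alpha> by (intro mult_mono) auto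
  ultimately have "L2^2 + 2 * \<alpha> * (\<bar>L2\<bar> * (\<bar>m1\<bar> + \<bar>m2\<bar>) + \<bar>L1\<bar> * \<bar>m2\<bar>)
      \<le> ((1 + \<alpha>) * R2)^2 + 2 * (1 + \<alpha>) * ((1 + \<alpha>) * R2 * (R1 + R2) + (1 + \<alpha>) * R1 * R2)"
    by linarith
  also have "\<dots> = (1 + \<alpha>)^2 * (3 * R2^2 + 4 * (R1 * R2))" by (simp add: algebra_simps power2_eq_square)
  finally show ?thesis .
qed

lemma badly_approximable_ratio:
  fixes a b :: nat and l1 m1 l2 m2 d :: int and \<alpha> :: real
  defines "\<alpha> \<equiv> sqrt (b / a)" and "d \<equiv> \<bar>det2 (l1, m1) (l2, m2)\<bar>"
  assumes a: "0 < a" and ab: "a < b" and irr: "\<alpha> \<notin> \<rat>" and det: "d \<noteq> 0"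
    and R22: "(supn (l2, m2))^2 \<le> 8 * d" and R12: "supn (l1, m1) * supn (l2, m2) \<le> 8 * d"
  shows "badly_approximable (- (l1 - \<alpha> * m1) / (l2 - \<alpha> * m2)) (224 * real b * d)"
proof (rule badly_approximableI)
  define L1 where "L1 = l1 - \<alpha> * m1"
  define L2 where "L2 = l2 - \<alpha> * m2"
  define W where "W = L2^2 + 2 * \<alpha> * (\<bar>L2\<bar> * (\<bar>m1\<bar> + \<bar>m2\<bar>) + \<bar>L1\<bar> * \<bar>m2\<bar>)"
  have \<alpha>: "0 \<le> \<alpha>" unfolding \<alpha>_def by simp
  have "3 * (real_of_int (supn (l2, m2)))^2 + 4 * (real_of_int (supn (l1, m1)) * supn (l2, m2)) \<le> 56 * real_of_int d"
    using R22 R12 by (simp flip: of_int_power of_int_mult)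
  moreover have "W \<le> (1 + \<alpha>)^2
      * (3 * (real_of_int (supn (l2, m2)))^2 + 4 * (real_of_int (supn (l1, m1)) * supn (l2, m2)))"
    unfolding W_def L1_def L2_def by (rule ratio_constant_le[OF \<alpha>])
  ultimately have W: "W \<le> (1 + \<alpha>)^2 * (56 * real_of_int d)"
    using mult_left_mono[of _ "56 * real_of_int d" "(1 + \<alpha>)^2"] by fastforce
  have "a * \<alpha>^2 = b" "a * \<alpha> \<le> b" unfolding \<alpha>_def using a ab mult_sqrt_div_le[of a b] by simp_all
  then have a\<alpha>: "a * (1 + \<alpha>)^2 \<le> 4 * real b" using ab by (simp add: algebra_simps power2_eq_square)
  have "a * W \<le> a * (1 + \<alpha>)^2 * (56 * real_of_int d)"
    using mult_left_mono[OF W, of "real a"] by (simp add: mult.assoc)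
  also have "\<dots> \<le> 4 * real b * (56 * real_of_int d)"
    using a\<alpha> by (rule mult_right_mono) (simp add: d_def)
  finally have "a * W \<le> 4 * real b * (56 * real_of_int d)" .
  then have aW: "a * W \<le> 224 * real b * d" by simp
  fix q p :: int assume q: "0 < q" and close: "\<bar>q * (- (l1 - \<alpha> * m1) / (l2 - \<alpha> * m2)) - p\<bar> < 1 / q"
  have "1 \<le> a * W * q * \<bar>q * (- L1 / L2) - p\<bar>"
    using linear_form_ratio_approx[OF a irr[unfolded \<alpha>_def] _ q, of l1 m1 l2 m2 p] close det
    unfolding W_def L1_def L2_def \<alpha>_def d_def by simp
  also have "\<dots> \<le> 224 * real b * d * q * \<bar>q * (- L1 / L2) - p\<bar>"
    using aW q by (intro mult_right_mono) auto
  finally show "1 \<le> 224 * real b * d * q * \<bar>q * (- (l1 - \<alpha> * m1) / (l2 - \<alpha> * m2)) - p\<bar>"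
    unfolding L1_def L2_def .
next
  have "1 \<le> real b" "1 \<le> real_of_int d" using ab det unfolding d_def by auto
  then have "1 * 1 \<le> real b * real_of_int d" by (intro mult_mono) auto
  then show "1 \<le> 224 * real b * d" by simp
qed

section \<open>Successive minima of planar lattices\<close>

lemma int_Least_nonneg:
  fixes P :: "int \<Rightarrow> bool"
  assumes nonneg: "\<And>x. P x \<Longrightarrow> 0 \<le> x" and "P k"
  shows "P (Least P)" and "P y \<Longrightarrow> Least P \<le> y"
proof -
  define n where "n = (LEAST n::nat. P (int n))"
  have "P (int (nat k))" using \<open>P k\<close> nonneg[OF \<open>P k\<close>] by simp
  then have Pn: "P (int n)" unfolding n_def by (rule LeastI)
  have min: "int n \<le> y" if "P y" for y
  proof -
    have "P (int (nat y))" using that nonneg[OF that] by simp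
    then have "n \<le> nat y" unfolding n_def by (rule Least_le)
    then show ?thesis using nonneg[OF that] by simp
  qed
  have "Least P = int n" by (rule Least_equality) (use Pn min in auto)
  then show "P (Least P)" and "P y \<Longrightarrow> Least P \<le> y" using Pn min by simp_all
qed

definition lattice_point :: "int \<times> int \<Rightarrow> int \<times> int \<Rightarrow> int \<Rightarrow> int \<Rightarrow> int \<times> int" where
  "lattice_point e1 e2 m n = (m * fst e1 + n * fst e2, m * snd e1 + n * snd e2)"

lemma lattice_of_iff: "x \<in> lattice_of e1 e2 \<longleftrightarrow> (\<exists>m n. x = lattice_point e1 e2 m n)"
  unfolding lattice_of_def lattice_point_def by auto

lemma det2_lattice_point:
  "det2 (lattice_point e1 e2 m n) (lattice_point e1 e2 m' n') = (m * n' - n * m') * det2 e1 e2"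
  unfolding lattice_point_def det2_def by (simp add: algebra_simps)

lemma supn_nonneg: "0 \<le> supn v"
  unfolding supn_def by simp

lemma supn_ge_one: "v \<noteq> (0, 0) \<Longrightarrow> 1 \<le> supn v"
  unfolding supn_def by (cases v) auto

lemma nu1_attained:
  assumes "det2 e1 e2 \<noteq> 0"
  shows "\<exists>v\<in>lattice_of e1 e2. v \<noteq> (0, 0) \<and> supn v = nu1 (lattice_of e1 e2)"
    and "w \<in> lattice_of e1 e2 \<Longrightarrow> w \<noteq> (0, 0) \<Longrightarrow> nu1 (lattice_of e1 e2) \<le> supn w"
proof -
  let ?P = "\<lambda>r. \<exists>v\<in>lattice_of e1 e2. v \<noteq> (0, 0) \<and> supn v = r"
  have "e1 = lattice_point e1 e2 1 0" unfolding lattice_point_def by simp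
  then have "e1 \<in> lattice_of e1 e2" unfolding lattice_of_iff by blast
  moreover have "e1 \<noteq> (0, 0)" using assms unfolding det2_def by auto
  ultimately have "?P (supn e1)" by blast
  note least = int_Least_nonneg[of ?P, OF _ this]
  show "?P (nu1 (lattice_of e1 e2))" unfolding nu1_def by (rule least(1)) (use supn_nonneg in auto)
  show "nu1 (lattice_of e1 e2) \<le> supn w" if "w \<in> lattice_of e1 e2" "w \<noteq> (0, 0)"
    unfolding nu1_def by (rule least(2)) (use supn_nonneg that in auto)
qed

lemma nu2_le:
  assumes "v \<in> lattice_of e1 e2" "w \<in> lattice_of e1 e2" "det2 v w \<noteq> 0"
  shows "nu2 (lattice_of e1 e2) \<le> max (supn v) (supn w)"
proof -
  let ?P = "\<lambda>r. \<exists>v\<in>lattice_of e1 e2. \<exists>w\<in>lattice_of e1 e2. det2 v w \<noteq> 0 \<and> supn v \<le> r \<and> supn w \<le> r"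
  have P: "?P (max (supn v) (supn w))" using assms by (intro bexI[OF _ assms(1)] bexI[OF _ assms(2)]) auto
  have "0 \<le> r" if "?P r" for r using that supn_nonneg order_trans by blast
  then show ?thesis unfolding nu2_def using int_Least_nonneg(2)[of ?P, OF _ P P] by blast
qed

lemma supn_scale: "supn (g * x, g * y) = \<bar>g\<bar> * supn (x, y)"
  unfolding supn_def by (simp add: abs_mult max_mult_distrib_left)

lemma exists_small_shift:
  fixes b c :: int
  assumes "b \<noteq> 0"
  obtains k where "2 * \<bar>c + k * b\<bar> \<le> \<bar>b\<bar>"
proof -
  define B where "B = \<bar>b\<bar>"
  define r where "r = c mod B"
  have B: "0 < B" using assms unfolding B_def by simp
  have r: "0 \<le> r" "r < B" "c = B * (c div B) + r" unfolding r_def using B by simp_all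
  obtain j where j: "2 * \<bar>c + j * B\<bar> \<le> B"
  proof (cases "2 * r \<le> B")
    case True
    then show ?thesis using r that[of "- (c div B)"] by (simp add: algebra_simps)
  next
    case False
    then show ?thesis using r that[of "- (c div B) - 1"] by (simp add: algebra_simps)
  qed
  have jB: "j * B = (j * sgn b) * b" unfolding B_def by (simp add: abs_sgn mult.assoc)
  from j have "2 * \<bar>c + (j * sgn b) * b\<bar> \<le> B" by (simp only: jB)
  then show ?thesis using that unfolding B_def by blast
qed

lemma max_abs_le_of_det:
  fixes v1 v2 x1 x2 D s :: int
  assumes "\<bar>v2\<bar> \<le> \<bar>v1\<bar>" "s = \<bar>v1\<bar>" "v1 * x2 - v2 * x1 = D" "2 * \<bar>x1\<bar> \<le> s"
  shows "2 * s * max \<bar>x1\<bar> \<bar>x2\<bar> \<le> 2 * \<bar>D\<bar> + s^2"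
proof -
  have s: "0 \<le> s" using assms by simp
  have "v1 * x2 = D + v2 * x1" using assms(3) by simp
  then have "s * \<bar>x2\<bar> = \<bar>D + v2 * x1\<bar>" using assms(2) by (metis abs_mult)
  also have "\<dots> \<le> \<bar>D\<bar> + s * \<bar>x1\<bar>"
    using abs_triangle_ineq[of D "v2 * x1"] mult_right_mono[OF assms(1) abs_ge_zero[of x1]] assms(2)
    by (simp add: abs_mult)
  finally have x2: "s * \<bar>x2\<bar> \<le> \<bar>D\<bar> + s * \<bar>x1\<bar>" .
  have x1: "s * (2 * \<bar>x1\<bar>) \<le> s * s" using assms s by (intro mult_left_mono) auto
  have "2 * s * \<bar>x1\<bar> \<le> 2 * \<bar>D\<bar> + s^2" "2 * s * \<bar>x2\<bar> \<le> 2 * \<bar>D\<bar> + s^2"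
    using x1 x2 by (simp_all add: power2_eq_square algebra_simps)
  then show ?thesis by (simp add: max_def)
qed

lemma nu1_vector_coprime:
  assumes det: "det2 e1 e2 \<noteq> 0"
    and v: "lattice_point e1 e2 m n \<noteq> (0, 0)" "supn (lattice_point e1 e2 m n) = nu1 (lattice_of e1 e2)"
  shows "coprime m n"
proof (rule ccontr)
  assume "\<not> coprime m n"
  define g where "g = gcd m n"
  have "m \<noteq> 0 \<or> n \<noteq> 0" using v unfolding lattice_point_def by auto
  then have "0 < g" unfolding g_def by simp
  moreover have "g \<noteq> 1" using \<open>\<not> coprime m n\<close> unfolding g_def by (simp add: coprime_iff_gcd_eq_1)
  ultimately have "2 \<le> g" by linarith
  obtain m' n' where mn: "m = g * m'" "n = g * n'" unfolding g_def by (meson dvd_def gcd_dvd1 gcd_dvd2)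
  define v' where "v' = lattice_point e1 e2 m' n'"
  have "lattice_point e1 e2 m n = (g * fst v', g * snd v')"
    unfolding v'_def lattice_point_def mn by (simp add: algebra_simps)
  then have sv: "supn (lattice_point e1 e2 m n) = g * supn v'" using \<open>2 \<le> g\<close> supn_scale by simp
  have "v' \<noteq> (0, 0)" using v \<open>lattice_point e1 e2 m n = _\<close> by auto
  moreover have "v' \<in> lattice_of e1 e2" unfolding v'_def lattice_of_iff by blast
  ultimately have "supn (lattice_point e1 e2 m n) \<le> supn v'"
    using nu1_attained(2)[OF det] v by simp
  moreover have "2 * supn v' \<le> g * supn v'"
    using \<open>2 \<le> g\<close> supn_nonneg[of v'] by (intro mult_right_mono) auto
  ultimately show False using sv supn_ge_one[OF \<open>v' \<noteq> (0, 0)\<close>] by linarith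
qed

(* Completing v to a basis (v, u) by Bezout, every u + k v has the same determinant with v;
   k is chosen to make the coordinate where v is largest at most supn v / 2. *)
lemma exists_short_complement:
  assumes v: "v = lattice_point e1 e2 m n" and mn: "coprime m n"
  obtains x where "x \<in> lattice_of e1 e2" "det2 v x = det2 e1 e2"
    "2 * supn v * supn x \<le> 2 * \<bar>det2 e1 e2\<bar> + (supn v)^2"
proof -
  define D where "D = det2 e1 e2"
  obtain i j where "i * m + j * n = 1" using mn by (metis bezout_int coprime_iff_gcd_eq_1)
  define u where "u = lattice_point e1 e2 (- j) i"
  define x where "x k = lattice_point e1 e2 (- j + k * m) (i + k * n)" for k
  have x_lattice: "x k \<in> lattice_of e1 e2" for k unfolding x_def lattice_of_iff by blast
  have x_det: "det2 v (x k) = D" for k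
    unfolding v x_def D_def det2_lattice_point using \<open>i * m + j * n = 1\<close> by (simp add: algebra_simps)
  have x_coord: "fst (x k) = fst u + k * fst v" "snd (x k) = snd u + k * snd v" for k
    unfolding x_def u_def v lattice_point_def by (simp_all add: algebra_simps)
  have det_coord: "det2 v y = fst v * snd y - snd v * fst y" for y unfolding det2_def by simp
  have "\<exists>k. 2 * supn v * supn (x k) \<le> 2 * \<bar>D\<bar> + (supn v)^2"
  proof (cases "\<bar>snd v\<bar> \<le> \<bar>fst v\<bar>")
    case True
    show ?thesis
    proof (cases "fst v = 0")
      case False
      then obtain k where "2 * \<bar>fst u + k * fst v\<bar> \<le> \<bar>fst v\<bar>" by (rule exists_small_shift)
      then have "2 * supn v * max \<bar>fst (x k)\<bar> \<bar>snd (x k)\<bar> \<le> 2 * \<bar>D\<bar> + (supn v)^2"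
        using True x_det[of k] det_coord[of "x k"] x_coord[of k]
        by (intro max_abs_le_of_det[of "snd v" "fst v"]) (auto simp: supn_def)
      then show ?thesis unfolding supn_def by blast
    qed (use True in \<open>simp add: supn_def\<close>)
  next
    case False
    then have "snd v \<noteq> 0" by auto
    then obtain k where "2 * \<bar>snd u + k * snd v\<bar> \<le> \<bar>snd v\<bar>" by (rule exists_small_shift)
    then have "2 * supn v * max \<bar>snd (x k)\<bar> \<bar>fst (x k)\<bar> \<le> 2 * \<bar>- D\<bar> + (supn v)^2"
      using False x_det[of k] det_coord[of "x k"] x_coord[of k]
      by (intro max_abs_le_of_det[of "fst v" "snd v"]) (auto simp: supn_def)
    then show ?thesis unfolding supn_def by (metis abs_minus_cancel max.commute)
  qed
  then show ?thesis using that x_lattice x_det unfolding D_def by blast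
qed

lemma successive_minima_le_det:
  assumes det: "det2 e1 e2 \<noteq> 0"
  shows "(nu1 (lattice_of e1 e2))^2 \<le> 2 * \<bar>det2 e1 e2\<bar>"
    and "nu1 (lattice_of e1 e2) * nu2 (lattice_of e1 e2) \<le> 2 * \<bar>det2 e1 e2\<bar>"
proof -
  define G where "G = lattice_of e1 e2"
  define s where "s = nu1 G"
  obtain v where v: "v \<in> G" "v \<noteq> (0, 0)" "supn v = s"
    using nu1_attained(1)[OF det] unfolding G_def s_def by blast
  then obtain m n where mn: "v = lattice_point e1 e2 m n" unfolding G_def lattice_of_iff by blast
  then have "coprime m n" using nu1_vector_coprime[OF det] v unfolding G_def s_def by blast
  then obtain x where x: "x \<in> G" "det2 v x = det2 e1 e2"
    and short: "2 * s * supn x \<le> 2 * \<bar>det2 e1 e2\<bar> + s^2"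
    using exists_short_complement[OF mn] v(3) unfolding G_def by metis
  have "x \<noteq> (0, 0)" using x(2) det unfolding det2_def by auto
  then have "s \<le> supn x" using nu1_attained(2)[OF det] x(1) unfolding G_def s_def by blast
  moreover have "nu2 G \<le> supn x"
    using nu2_le[of v e1 e2 x] v x det \<open>s \<le> supn x\<close> unfolding G_def by simp
  moreover have "0 \<le> s" using v(3) supn_nonneg by metis
  ultimately have "s * s \<le> s * supn x" "s * nu2 G \<le> s * supn x" by (simp_all add: mult_left_mono)
  then show "s^2 \<le> 2 * \<bar>det2 e1 e2\<bar>" and "s * nu2 G \<le> 2 * \<bar>det2 e1 e2\<bar>"
    using short by (simp_all add: power2_eq_square)
qed

lemma reduced_basis_bounds:
  assumes det: "det2 e1 e2 \<noteq> 0"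
    and e1: "supn e1 \<le> 2 * nu2 (lattice_of e1 e2)" and e2: "supn e2 \<le> 2 * nu1 (lattice_of e1 e2)"
  shows "(supn e2)^2 \<le> 8 * \<bar>det2 e1 e2\<bar>" and "supn e1 * supn e2 \<le> 8 * \<bar>det2 e1 e2\<bar>"
proof -
  have "(supn e2)^2 \<le> (2 * nu1 (lattice_of e1 e2))^2"
    using e2 supn_nonneg by (intro power_mono) auto
  then show "(supn e2)^2 \<le> 8 * \<bar>det2 e1 e2\<bar>"
    using successive_minima_le_det(1)[OF det] by (simp add: power_mult_distrib)
  have "supn e1 * supn e2 \<le> (2 * nu2 (lattice_of e1 e2)) * (2 * nu1 (lattice_of e1 e2))"
    using e1 e2 supn_nonneg[of e1] supn_nonneg[of e2] by (intro mult_mono) auto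
  then show "supn e1 * supn e2 \<le> 8 * \<bar>det2 e1 e2\<bar>"
    using successive_minima_le_det(2)[OF det] by (simp add: algebra_simps)
qed

theorem mainTheorem15:
  shows "\<exists>C>0. \<forall>(a::nat) (b::nat) (l1::int) (m1::int) (l2::int) (m2::int) (N::nat).
    0 < a \<longrightarrow> a < b \<longrightarrow> coprime a b \<longrightarrow>
    sqrt (real b / real a) \<notin> \<rat> \<longrightarrow>
    det2 (l1, m1) (l2, m2) \<noteq> 0 \<longrightarrow>
    supn (l1, m1) \<le> 2 * nu2 (lattice_of (l1, m1) (l2, m2)) \<longrightarrow>
    supn (l2, m2) \<le> 2 * nu1 (lattice_of (l1, m1) (l2, m2)) \<longrightarrow>
    1 < N \<longrightarrow>
    (let \<alpha> = sqrt (real b / real a);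
         \<theta> = - (real_of_int l1 - \<alpha> * real_of_int m1) / (real_of_int l2 - \<alpha> * real_of_int m2);
         d = real_of_int \<bar>det2 (l1, m1) (l2, m2)\<bar>
     in real N * discr \<alpha> N \<le> C * (real b / ln (real b)) * ln (real N) \<and>
        real N * discr \<theta> N \<le> C * (real b * d / ln (real b * d)) * ln (real N))"
proof (intro exI[of _ "910::real"] conjI allI impI)
  fix a b :: nat and l1 m1 l2 m2 :: int and N :: nat
  assume a: "0 < a" and ab: "a < b" and "coprime a b" and irr: "sqrt (real b / real a) \<notin> \<rat>"
    and det: "det2 (l1, m1) (l2, m2) \<noteq> 0"
    and e1: "supn (l1, m1) \<le> 2 * nu2 (lattice_of (l1, m1) (l2, m2))"
    and e2: "supn (l2, m2) \<le> 2 * nu1 (lattice_of (l1, m1) (l2, m2))"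
    and N: "1 < N"
  define \<alpha> where "\<alpha> = sqrt (real b / real a)"
  define d where "d = real_of_int \<bar>det2 (l1, m1) (l2, m2)\<bar>"
  have b: "2 \<le> real b" using ab a by simp
  have "2 * 1 \<le> real b * d" using b det unfolding d_def by (intro mult_mono) auto
  then have bd: "2 \<le> real b * d" by simp
  have "real N * discr \<alpha> N \<le> (4 * 3 + 14) * (real b / ln (real b)) * ln (real N)"
    using discr_le_div_ln[OF badly_approximable_sqrt[OF a ab irr], of "real b" 3 N] b N
    unfolding \<alpha>_def by simp
  also have "\<dots> \<le> 910 * (real b / ln (real b)) * ln (real N)"
    using b N by (intro mult_right_mono) auto
  finally have "real N * discr \<alpha> N \<le> 910 * (real b / ln (real b)) * ln (real N)" .
  moreover have "real N * discr (- (l1 - \<alpha> * m1) / (l2 - \<alpha> * m2)) N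
      \<le> (4 * 224 + 14) * (real b * d / ln (real b * d)) * ln (real N)"
    using discr_le_div_ln[OF badly_approximable_ratio[OF a ab irr _ reduced_basis_bounds[OF det e1 e2]],
        of "real b * d" 224 N] det bd N
    unfolding \<alpha>_def d_def by simp
  ultimately show "let \<alpha> = sqrt (real b / real a);
         \<theta> = - (real_of_int l1 - \<alpha> * real_of_int m1) / (real_of_int l2 - \<alpha> * real_of_int m2);
         d = real_of_int \<bar>det2 (l1, m1) (l2, m2)\<bar>
     in real N * discr \<alpha> N \<le> 910 * (real b / ln (real b)) * ln (real N) \<and>
        real N * discr \<theta> N \<le> 910 * (real b * d / ln (real b * d)) * ln (real N)"
    unfolding Let_def \<alpha>_def d_def by simp
qed simp

end
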